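(* There exists a normal set $A \subseteq \mathbb{N}$ such that there are no $x,y,z \in A$ with $xy = z$.
   Context: $\mathbb{N} = \{1,2,3,\dots\}$. An infinite binary sequence $(\lambda_i)_{i \ge 1}$ is called normal if every finite binary word $\omega$ of length $|\omega|$ occurs in the sequence with asymptotic frequency $2^{-|\omega|}$, i.e. the number of $i \le N$ with $(\lambda_i,\dots,\lambda_{i+|\omega|-1}) = \omega$, divided by $N$, tends to $2^{-|\omega|}$ as $N \to \infty$. A set $B \subseteq \mathbb{N}$ is called normal if its indicator sequence ($\lambda_i = 1$ iff $i \in B$) is normal. *)

theory Defs
  imports Complex_Main
begin

text \<open>An infinite binary sequence indexed from 1 is represented by a function
  lam :: nat \<Rightarrow> bool (value at 0 irrelevant); True stands for 1.
  Occurrence of word w at position i: lam (i + j) = w ! j for all j < length w.\<close>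

definition occurs_at :: "(nat \<Rightarrow> bool) \<Rightarrow> bool list \<Rightarrow> nat \<Rightarrow> bool" where
  "occurs_at lam w i \<longleftrightarrow> (\<forall>j < length w. lam (i + j) = w ! j)"

definition normal_seq :: "(nat \<Rightarrow> bool) \<Rightarrow> bool" where
  "normal_seq lam \<longleftrightarrow>
     (\<forall>w :: bool list.
        (\<lambda>N. real (card {i \<in> {1..N}. occurs_at lam w i}) / real N)
          \<longlonglongrightarrow> (1 / 2) ^ length w)"

definition normal_set :: "nat set \<Rightarrow> bool" where
  "normal_set B \<longleftrightarrow> normal_seq (\<lambda>i. i \<in> B)"

end

theory Submission
  imports
    Defs
    "HOL-Computational_Algebra.Nth_Powers"
    "HOL-Analysis.Function_Topology"
    "HOL-Analysis.Harmonic_Numbers"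
    "HOL-Real_Asymp.Real_Asymp"
begin

(* For a set S of primes let \<lambda>_S be the completely multiplicative function with \<lambda>_S(p) = -1 for
   p \<in> S and \<lambda>_S(p) = 1 for the other primes, and let A = {n. \<lambda>_S(n) = -1}. Since
   \<lambda>_S(xy) = \<lambda>_S(x) \<lambda>_S(y) = 1 for x, y \<in> A, the set A is product-free, and A is normal as soon as
   every correlation sum \<Sum>_{n \<le> N} \<Prod>_{j \<in> J} \<lambda>_S(n + j), J finite and nonempty, is o(N).

   Averaged over all S \<subseteq> {0..<M}, the square of such a correlation sum equals the number of
   pairs m, n \<le> N for which Q(m) Q(n) is a square, Q(n) = \<Prod>_{j \<in> J} (n + j). If J \<subseteq> {0..<l}, a
   prime p \<ge> l divides at most one factor n + j of Q(n); so for fixed m and j \<in> J, n + j is a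
   square times a product of primes dividing l! Q(m), and there are only O_l(N^(13/8)) such pairs.
   Along the scales N = t^16, Chebyshev's inequality and a union bound with weights
   1 / (2^(l+1) t (t + 1)) give, for every finite set of scales, a set S whose correlations are at
   most t^15 there; compactness of the Cantor space yields one S good at all scales, and
   interpolating between consecutive scales gives o(N) for every N. *)

section \<open>The completely multiplicative functions \<lambda>_S\<close>

definition liouville_on :: "nat set \<Rightarrow> nat \<Rightarrow> real" where
  "liouville_on S n = (-1) ^ size {#p \<in># prime_factorization n. p \<in> S#}"

lemma liouville_on_0 [simp]: "liouville_on S 0 = 1"
  unfolding liouville_on_def by simp

lemma liouville_on_1 [simp]: "liouville_on S 1 = 1"
  unfolding liouville_on_def by simp

lemma liouville_on_mult:
  "a \<noteq> 0 \<Longrightarrow> b \<noteq> 0 \<Longrightarrow> liouville_on S (a * b) = liouville_on S a * liouville_on S b"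
  by (simp add: liouville_on_def prime_factorization_mult power_add)

lemma liouville_on_prod:
  "finite I \<Longrightarrow> (\<And>i. i \<in> I \<Longrightarrow> f i \<noteq> 0) \<Longrightarrow>
    liouville_on S (\<Prod>i\<in>I. f i) = (\<Prod>i\<in>I. liouville_on S (f i))"
proof (induction I rule: finite_induct)
  case empty
  show ?case
    by (simp only: prod.empty liouville_on_1)
qed (simp add: liouville_on_mult)

lemma liouville_on_cases: "liouville_on S n = 1 \<or> liouville_on S n = -1"
  by (simp add: liouville_on_def minus_one_power_iff)

lemma abs_liouville_on [simp]: "\<bar>liouville_on S n\<bar> = 1"
  using liouville_on_cases[of S n] by auto

lemma liouville_on_insert:
  assumes "p \<notin> S"
  shows "liouville_on (insert p S) n = (-1) ^ count (prime_factorization n) p * liouville_on S n"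
proof -
  have "{#q \<in># X. q \<in> insert p S#} = {#q \<in># X. q = p#} + {#q \<in># X. q \<in> S#}" for X
    using assms by (induction X) auto
  then show ?thesis
    by (simp add: liouville_on_def filter_eq_replicate_mset power_add)
qed

lemma liouville_on_cong:
  assumes "S \<inter> {..n} = S' \<inter> {..n}"
  shows "liouville_on S n = liouville_on S' n"
proof -
  have "p \<in> S \<longleftrightarrow> p \<in> S'" if "p \<in># prime_factorization n" for p
    using that assms dvd_imp_le[of p n] by (auto simp: in_prime_factors_iff)
  then show ?thesis
    unfolding liouville_on_def by (metis (no_types, lifting) filter_mset_cong)
qed

lemma sum_liouville_on_Pow:
  "finite P \<Longrightarrow>
    (\<Sum>S\<in>Pow P. liouville_on S n) = (\<Prod>p\<in>P. 1 + (-1) ^ count (prime_factorization n) p)"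
proof (induction P rule: finite_induct)
  case (insert p P)
  have p_notin: "p \<notin> S" if "S \<in> Pow P" for S
    using that insert.hyps by auto
  then have "Pow P \<inter> insert p ` Pow P = {}" "inj_on (insert p) (Pow P)"
    by (auto intro!: inj_onI simp: insert_ident)
  then have "(\<Sum>S\<in>Pow (insert p P). liouville_on S n) =
      (\<Sum>S\<in>Pow P. liouville_on S n) + (\<Sum>S\<in>Pow P. liouville_on (insert p S) n)"
    using insert.hyps by (simp add: Pow_insert sum.union_disjoint sum.reindex)
  also have "\<dots> = (1 + (-1) ^ count (prime_factorization n) p) * (\<Sum>S\<in>Pow P. liouville_on S n)"
    using p_notin by (simp add: liouville_on_insert sum_distrib_left sum_distrib_right algebra_simps)
  finally show ?case
    using insert by simp
qed (simp add: liouville_on_def)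

lemma is_square_iff_even_count:
  "(n :: nat) > 0 \<Longrightarrow> is_square n \<longleftrightarrow> (\<forall>p. even (count (prime_factorization n) p))"
proof -
  have "even (count (prime_factorization n) p) \<longleftrightarrow> (prime p \<longrightarrow> even (multiplicity p n))" for p
    by (simp add: count_prime_factorization)
  then show ?thesis
    using is_nth_power_conv_multiplicity_nat[of 2 n] by auto
qed

lemma sum_liouville_on_Pow_eq:
  assumes "finite P" "n > 0" "prime_factors n \<subseteq> P"
  shows "(\<Sum>S\<in>Pow P. liouville_on S n) = (if is_square n then 2 ^ card P else 0)"
proof (cases "is_square n")
  case True
  then show ?thesis
    using assms by (simp add: sum_liouville_on_Pow is_square_iff_even_count)
next
  case False
  then obtain p where "odd (count (prime_factorization n) p)"
    using assms is_square_iff_even_count by blast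
  moreover from this have "p \<in> P"
    using assms(3) odd_pos by fastforce
  ultimately show ?thesis
    using assms False by (auto simp: sum_liouville_on_Pow intro!: prod_zero bexI[of _ p])
qed

section \<open>Correlation sums and their second moment\<close>

definition shifted_product :: "nat set \<Rightarrow> nat \<Rightarrow> nat" where
  "shifted_product J n = (\<Prod>j\<in>J. n + j)"

definition correlation_sum :: "nat set \<Rightarrow> nat set \<Rightarrow> nat \<Rightarrow> real" where
  "correlation_sum S J N = (\<Sum>n=1..N. \<Prod>j\<in>J. liouville_on S (n + j))"

lemma shifted_product_pos: "finite J \<Longrightarrow> n \<ge> 1 \<Longrightarrow> shifted_product J n > 0"
  unfolding shifted_product_def by (simp add: prod_pos)

lemma correlation_sum_eq:
  "finite J \<Longrightarrow> correlation_sum S J N = (\<Sum>n=1..N. liouville_on S (shifted_product J n))"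
  unfolding correlation_sum_def shifted_product_def
  by (intro sum.cong refl liouville_on_prod[symmetric]) auto

lemma prime_factors_shifted_product_subset:
  assumes "finite J" "J \<subseteq> {..<l}" "n \<ge> 1"
  shows "prime_factors (shifted_product J n) \<subseteq> {..<n + l}"
proof
  fix p assume "p \<in> prime_factors (shifted_product J n)"
  then have "prime p" "p dvd (\<Prod>j\<in>J. n + j)"
    by (auto simp: shifted_product_def)
  then obtain j where "j \<in> J" "p dvd n + j"
    using prime_dvd_prod_iff[OF assms(1)] by blast
  then show "p \<in> {..<n + l}"
    using assms(2,3) dvd_imp_le[of p "n + j"] by auto
qed

lemma prime_factors_shifted_product_mult_subset:
  assumes J: "finite J" "J \<subseteq> {..<l}" and "m \<in> {1..N}" "n \<in> {1..N}"
  shows "prime_factors (shifted_product J m * shifted_product J n) \<subseteq> {..<N + l}"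
proof -
  have "prime_factors (shifted_product J m * shifted_product J n) =
      prime_factors (shifted_product J m) \<union> prime_factors (shifted_product J n)"
    using assms shifted_product_pos[OF J(1)] by (intro prime_factors_product) auto
  moreover have "prime_factors (shifted_product J k) \<subseteq> {..<N + l}" if "k \<in> {1..N}" for k
    using prime_factors_shifted_product_subset[OF J, of k] that by auto
  ultimately show ?thesis
    using assms(3,4) by simp
qed

lemma sum_correlation_sum_squared:
  assumes J: "finite J" "J \<subseteq> {..<l}" and "N + l \<le> M"
  shows "(\<Sum>S\<in>Pow {..<M}. (correlation_sum S J N)\<^sup>2) =
    2 ^ M * card {(m, n) \<in> {1..N} \<times> {1..N}. is_square (shifted_product J m * shifted_product J n)}"
proof -
  let ?I = "{1..N}"
  let ?q = "\<lambda>m n. shifted_product J m * shifted_product J n"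
  have "(correlation_sum S J N)\<^sup>2 = (\<Sum>(m, n)\<in>?I \<times> ?I. liouville_on S (?q m n))" for S
  proof -
    have "(correlation_sum S J N)\<^sup>2 =
        (\<Sum>(m, n)\<in>?I \<times> ?I. liouville_on S (shifted_product J m) * liouville_on S (shifted_product J n))"
      by (simp add: correlation_sum_eq[OF J(1)] power2_eq_square sum_product sum.cartesian_product)
    also have "\<dots> = (\<Sum>(m, n)\<in>?I \<times> ?I. liouville_on S (?q m n))"
      by (intro sum.cong refl) (auto simp: liouville_on_mult shifted_product_pos[OF J(1)])
    finally show ?thesis .
  qed
  then have "(\<Sum>S\<in>Pow {..<M}. (correlation_sum S J N)\<^sup>2) =
      (\<Sum>S\<in>Pow {..<M}. \<Sum>(m, n)\<in>?I \<times> ?I. liouville_on S (?q m n))"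
    by simp
  also have "\<dots> = (\<Sum>(m, n)\<in>?I \<times> ?I. \<Sum>S\<in>Pow {..<M}. liouville_on S (?q m n))"
    unfolding case_prod_unfold by (rule sum.swap)
  also have "\<dots> = (\<Sum>(m, n)\<in>?I \<times> ?I. if is_square (?q m n) then 2 ^ M else 0)"
  proof (intro sum.cong refl, unfold case_prod_unfold)
    fix x assume x: "x \<in> ?I \<times> ?I"
    then have "?q (fst x) (snd x) > 0"
      using shifted_product_pos[OF J(1)] by auto
    moreover have "prime_factors (?q (fst x) (snd x)) \<subseteq> {..<M}"
      using prime_factors_shifted_product_mult_subset[OF J, of "fst x" N "snd x"] x assms(3)
      by (auto simp: mem_Times_iff)
    ultimately show "(\<Sum>S\<in>Pow {..<M}. liouville_on S (?q (fst x) (snd x))) =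
        (if is_square (?q (fst x) (snd x)) then 2 ^ M else 0)"
      using sum_liouville_on_Pow_eq[OF finite_lessThan] by simp
  qed
  also have "\<dots> = 2 ^ M * card {(m, n) \<in> ?I \<times> ?I. is_square (?q m n)}"
    by (simp add: sum.inter_filter[symmetric] case_prod_unfold mem_Times_iff conj_assoc)
  finally show ?thesis .
qed

section \<open>Counting square values of products of shifts\<close>

definition odd_multiplicity_primes :: "nat \<Rightarrow> nat set" where
  "odd_multiplicity_primes n = {p \<in> prime_factors n. odd (multiplicity p n)}"

lemma odd_multiplicity_primes_times_square:
  fixes n :: nat
  assumes "n > 0"
  shows "\<exists>u. n = \<Prod>(odd_multiplicity_primes n) * u\<^sup>2"
proof -
  define u where "u = (\<Prod>p\<in>prime_factors n. p ^ (multiplicity p n div 2))"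
  have "n = (\<Prod>p\<in>prime_factors n. p ^ multiplicity p n)"
    using prime_factorization_nat[OF assms] .
  also have "\<dots> = (\<Prod>p\<in>prime_factors n.
      (if odd (multiplicity p n) then p else 1) * (p ^ (multiplicity p n div 2))\<^sup>2)"
  proof (rule prod.cong[OF refl])
    fix p
    have "p ^ multiplicity p n = p ^ (multiplicity p n mod 2) * p ^ (2 * (multiplicity p n div 2))"
      by (simp flip: power_add)
    then show "p ^ multiplicity p n =
        (if odd (multiplicity p n) then p else 1) * (p ^ (multiplicity p n div 2))\<^sup>2"
      by (simp add: odd_iff_mod_2_eq_one power_mult[symmetric] mult.commute[of 2] power_even_eq)
  qed
  also have "\<dots> = \<Prod>(odd_multiplicity_primes n) * u\<^sup>2"
    unfolding u_def odd_multiplicity_primes_def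
    by (simp add: prod.distrib prod_power_distrib prod.inter_filter)
  finally show ?thesis
    by blast
qed

lemma square_multiples_subset:
  fixes d X :: nat
  assumes "d \<ge> 1"
  shows "{u. u \<ge> 1 \<and> d * u\<^sup>2 \<le> X} \<subseteq> {1..nat \<lfloor>sqrt (X / d)\<rfloor>}"
proof
  fix u assume u: "u \<in> {u. u \<ge> 1 \<and> d * u\<^sup>2 \<le> X}"
  then have "real d * (real u)\<^sup>2 \<le> real X"
    by (metis mem_Collect_eq of_nat_le_iff of_nat_mult of_nat_power)
  then have "(real u)\<^sup>2 \<le> X / d"
    using assms by (simp add: field_simps)
  then have "u \<le> nat \<lfloor>sqrt (X / d)\<rfloor>"
    by (intro le_nat_floor real_le_rsqrt)
  then show "u \<in> {1..nat \<lfloor>sqrt (X / d)\<rfloor>}"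
    using u by auto
qed

lemma card_square_multiples_le:
  fixes d X :: nat
  assumes "d \<ge> 1"
  shows "real (card {u. u \<ge> 1 \<and> d * u\<^sup>2 \<le> X}) \<le> sqrt (X / d)"
proof -
  have "card {u. u \<ge> 1 \<and> d * u\<^sup>2 \<le> X} \<le> nat \<lfloor>sqrt (X / d)\<rfloor>"
    using card_mono[OF _ square_multiples_subset[OF assms]] by simp
  then show ?thesis
    by (meson of_nat_floor of_nat_le_iff order_trans real_sqrt_ge_zero zero_le_divide_iff of_nat_0_le_iff)
qed

lemma real_sqrt_prod: "sqrt (\<Prod>x\<in>A. f x) = (\<Prod>x\<in>A. sqrt (f x))"
  by (induction A rule: infinite_finite_induct) (auto simp: real_sqrt_mult)

(* Each such n is d u^2 with d a product of a subset of P, and for fixed d there are at most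
   sqrt (X / d) choices of u. *)
lemma card_odd_multiplicity_primes_subset_le:
  fixes P :: "nat set" and X :: nat
  assumes P: "finite P" "\<And>p. p \<in> P \<Longrightarrow> prime p"
  shows "real (card {n\<in>{1..X}. odd_multiplicity_primes n \<subseteq> P}) \<le> sqrt X * (\<Prod>p\<in>P. 1 + 1 / sqrt p)"
proof -
  define U where "U D = {u :: nat. u \<ge> 1 \<and> \<Prod>D * u\<^sup>2 \<le> X}" for D :: "nat set"
  have prod_ge_1: "\<Prod>D \<ge> 1" if "D \<in> Pow P" for D
    using that P(2) by (intro prod_ge_1) (auto simp: Suc_le_eq prime_gt_0_nat)
  have finite_U: "finite (U D)" if "D \<in> Pow P" for D
    unfolding U_def using square_multiples_subset[OF prod_ge_1[OF that]] by (rule finite_subset) simp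
  have "{n\<in>{1..X}. odd_multiplicity_primes n \<subseteq> P} \<subseteq> (\<lambda>(D, u). \<Prod>D * u\<^sup>2) ` (SIGMA D:Pow P. U D)"
  proof
    fix n assume n: "n \<in> {n\<in>{1..X}. odd_multiplicity_primes n \<subseteq> P}"
    then obtain u where u: "n = \<Prod>(odd_multiplicity_primes n) * u\<^sup>2"
      using odd_multiplicity_primes_times_square by fastforce
    with n have "u \<ge> 1"
      by (cases "u = 0") auto
    with n u show "n \<in> (\<lambda>(D, u). \<Prod>D * u\<^sup>2) ` (SIGMA D:Pow P. U D)"
      unfolding U_def by (intro image_eqI[of _ _ "(odd_multiplicity_primes n, u)"]) auto
  qed
  then have "card {n\<in>{1..X}. odd_multiplicity_primes n \<subseteq> P} \<le> card (SIGMA D:Pow P. U D)"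
    using P(1) finite_U by (intro surj_card_le) (auto intro: finite_SigmaI)
  also have "\<dots> = (\<Sum>D\<in>Pow P. card (U D))"
    using P(1) finite_U by (simp add: card_SigmaI)
  finally have "real (card {n\<in>{1..X}. odd_multiplicity_primes n \<subseteq> P}) \<le> (\<Sum>D\<in>Pow P. real (card (U D)))"
    by (simp flip: of_nat_sum)
  also have "\<dots> \<le> (\<Sum>D\<in>Pow P. sqrt X * (\<Prod>p\<in>D. 1 / sqrt p))"
  proof (rule sum_mono)
    fix D assume D: "D \<in> Pow P"
    have "real (card (U D)) \<le> sqrt (X / \<Prod>D)"
      unfolding U_def by (rule card_square_multiples_le[OF prod_ge_1[OF D]])
    also have "\<dots> = sqrt X * (\<Prod>p\<in>D. 1 / sqrt p)"
      by (simp add: real_sqrt_divide real_sqrt_prod prod_dividef)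
    finally show "real (card (U D)) \<le> sqrt X * (\<Prod>p\<in>D. 1 / sqrt p)" .
  qed
  also have "\<dots> = sqrt X * (\<Prod>p\<in>P. 1 / sqrt p + 1)"
    by (simp add: prod_add[OF P(1)] sum_distrib_left)
  finally show ?thesis
    by (simp add: add.commute)
qed

lemma multiplicity_shifted_product:
  assumes J: "finite J" "J \<subseteq> {..<l}" "j \<in> J" and "n \<ge> 1"
    and p: "prime p" "l \<le> p" "p dvd n + j"
  shows "multiplicity p (shifted_product J n) = multiplicity p (n + j)"
proof -
  have "\<not> p dvd n + i" if "i \<in> J" "i \<noteq> j" for i
  proof
    assume "p dvd n + i"
    then have "p dvd (n + max i j) - (n + min i j)"
      using p(3) by (intro dvd_diff_nat) (simp_all add: max_def min_def)
    then have "p \<le> max i j - min i j"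
      using that by (intro dvd_imp_le) (auto simp: max_def min_def)
    then show False
      using that J p(2) by (auto simp: subset_eq max_def min_def split: if_splits)
  qed
  then have "(\<Sum>i\<in>J - {j}. multiplicity p (n + i)) = 0"
    by (auto intro!: sum.neutral not_dvd_imp_multiplicity_0)
  moreover have "multiplicity p (shifted_product J n) = (\<Sum>i\<in>J. multiplicity p (n + i))"
    unfolding shifted_product_def using J(1) \<open>n \<ge> 1\<close> p(1)
    by (intro prime_elem_multiplicity_prod_distrib) auto
  ultimately show ?thesis
    using J by (simp add: sum.remove)
qed

(* A prime p \<ge> l divides at most one of the factors n + i of shifted_product J n, so an odd
   multiplicity in n + j must be compensated by shifted_product J m. *)
lemma odd_multiplicity_primes_subset_if_square:
  assumes J: "finite J" "J \<subseteq> {..<l}" "j \<in> J" and "m \<ge> 1" "n \<ge> 1"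
    and square: "is_square (shifted_product J m * shifted_product J n)"
  shows "odd_multiplicity_primes (n + j) \<subseteq> prime_factors (fact l * shifted_product J m)"
proof
  fix p assume "p \<in> odd_multiplicity_primes (n + j)"
  then have p: "prime p" "p dvd n + j" and odd: "odd (multiplicity p (n + j))"
    by (auto simp: odd_multiplicity_primes_def)
  have pos: "shifted_product J m > 0" "shifted_product J n > 0"
    using shifted_product_pos[OF J(1)] \<open>m \<ge> 1\<close> \<open>n \<ge> 1\<close> by auto
  show "p \<in> prime_factors (fact l * shifted_product J m)"
  proof (cases "p \<le> l")
    case True
    then have "p dvd fact l"
      using p(1) by (intro dvd_fact) (auto simp: prime_gt_0_nat Suc_le_eq)
    then show ?thesis
      using p(1) pos by (intro prime_factorsI) auto
  next
    case False
    have "even (multiplicity p (shifted_product J m * shifted_product J n))"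
      using square pos p(1) by (auto simp: is_nth_power_conv_multiplicity_nat)
    then have "even (multiplicity p (shifted_product J m) + multiplicity p (n + j))"
      using pos p False multiplicity_shifted_product[OF J \<open>n \<ge> 1\<close>, of p]
      by (simp add: prime_elem_multiplicity_mult_distrib)
    then have "multiplicity p (shifted_product J m) > 0"
      using odd by (intro odd_pos) presburger
    then have "p dvd shifted_product J m"
      using p(1) pos by (simp add: prime_multiplicity_gt_zero_iff)
    then show ?thesis
      using p(1) pos by (intro prime_factorsI) auto
  qed
qed

lemma card_square_partners_le:
  fixes l N :: nat
  assumes J: "finite J" "J \<subseteq> {..<l}" "J \<noteq> {}" and "m \<ge> 1"
  shows "real (card {n\<in>{1..N}. is_square (shifted_product J m * shifted_product J n)}) \<le>
    sqrt (N + l) * (\<Prod>p\<in>prime_factors (fact l * shifted_product J m). 1 + 1 / sqrt p)"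
proof -
  obtain j where j: "j \<in> J"
    using J(3) by blast
  let ?P = "prime_factors (fact l * shifted_product J m)"
  have "(\<lambda>n. n + j) ` {n\<in>{1..N}. is_square (shifted_product J m * shifted_product J n)} \<subseteq>
      {k\<in>{1..N + l}. odd_multiplicity_primes k \<subseteq> ?P}"
    using j J(2) odd_multiplicity_primes_subset_if_square[OF J(1,2) j \<open>m \<ge> 1\<close>] by fastforce
  then have "card {n\<in>{1..N}. is_square (shifted_product J m * shifted_product J n)} \<le>
      card {k\<in>{1..N + l}. odd_multiplicity_primes k \<subseteq> ?P}"
    by (intro card_inj_on_le[of "\<lambda>n. n + j"]) auto
  then have "real (card {n\<in>{1..N}. is_square (shifted_product J m * shifted_product J n)}) \<le>
      real (card {k\<in>{1..N + l}. odd_multiplicity_primes k \<subseteq> ?P})"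
    by linarith
  also have "\<dots> \<le> sqrt (N + l) * (\<Prod>p\<in>?P. 1 + 1 / sqrt p)"
    by (rule card_odd_multiplicity_primes_subset_le) auto
  finally show ?thesis .
qed

section \<open>An Euler product bound\<close>

lemma one_plus_inverse_sqrt_le_powr:
  fixes x \<epsilon> :: real
  assumes "\<epsilon> > 0" "x \<ge> 2" "4 / \<epsilon>\<^sup>2 \<le> x"
  shows "1 + 1 / sqrt x \<le> x powr \<epsilon>"
proof -
  have "1 / 2 \<le> ln (2 :: real)"
    using ln2_ge_two_thirds by simp
  also have "\<dots> \<le> ln x"
    using assms(2) by simp
  finally have ln_x: "1 / 2 \<le> ln x" .
  have "(2 / \<epsilon>)\<^sup>2 \<le> x"
    using assms(3) by (simp add: power_divide)
  then have "2 / \<epsilon> \<le> sqrt x"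
    by (rule real_le_rsqrt)
  moreover have "sqrt x > 0"
    using assms(2) by simp
  ultimately have "1 / sqrt x \<le> \<epsilon> / 2"
    using assms(1) by (simp add: field_simps)
  also have "\<dots> \<le> \<epsilon> * ln x"
    using assms(1) ln_x by simp
  finally have "1 + 1 / sqrt x \<le> 1 + \<epsilon> * ln x"
    by simp
  also have "\<dots> \<le> exp (\<epsilon> * ln x)"
    by (rule exp_ge_add_one_self)
  also have "\<dots> = x powr \<epsilon>"
    using assms(2) by (simp add: powr_def mult.commute)
  finally show ?thesis .
qed

lemma prod_prime_factors_le:
  fixes n :: nat
  assumes "n > 0"
  shows "(\<Prod>p\<in>prime_factors n. p) \<le> n"
proof -
  have "(\<Prod>p\<in>prime_factors n. p) \<le> (\<Prod>p\<in>prime_factors n. p ^ multiplicity p n)"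
  proof (rule prod_mono)
    fix p assume p: "p \<in> prime_factors n"
    then have "multiplicity p n > 0" "p > 0"
      using assms by (auto simp: prime_multiplicity_gt_zero_iff in_prime_factors_iff prime_gt_0_nat)
    then show "0 \<le> p \<and> p \<le> p ^ multiplicity p n"
      by (simp add: self_le_power)
  qed
  also have "\<dots> = n"
    using prime_factorization_nat[OF assms] by simp
  finally show ?thesis .
qed

lemma prod_subset_prime_factors_le:
  fixes n :: nat
  assumes "n > 0" "P \<subseteq> prime_factors n"
  shows "(\<Prod>p\<in>P. p) \<le> n"
proof -
  have "(\<Prod>p\<in>P. p) dvd (\<Prod>p\<in>prime_factors n. p)"
    using assms(2) by (intro prod_dvd_prod_subset) auto
  then have "(\<Prod>p\<in>P. p) \<le> (\<Prod>p\<in>prime_factors n. p)"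
    by (rule dvd_imp_le) (auto intro: prod_pos prime_gt_0_nat)
  also have "\<dots> \<le> n"
    by (rule prod_prime_factors_le[OF assms(1)])
  finally show ?thesis .
qed

lemma prod_one_plus_inverse_sqrt_le_powr:
  fixes n :: nat and \<epsilon> :: real
  assumes "n > 0" "\<epsilon> > 0" "P \<subseteq> prime_factors n" "\<And>p. p \<in> P \<Longrightarrow> 4 / \<epsilon>\<^sup>2 \<le> p"
  shows "(\<Prod>p\<in>P. 1 + 1 / sqrt p) \<le> n powr \<epsilon>"
proof -
  have "p \<ge> 2" if "p \<in> P" for p
    using that assms(3) by (auto intro: prime_ge_2_nat)
  then have "(\<Prod>p\<in>P. 1 + 1 / sqrt p) \<le> (\<Prod>p\<in>P. real p powr \<epsilon>)"
    using assms(2,4) by (intro prod_mono one_plus_inverse_sqrt_le_powr conjI) auto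
  also have "\<dots> = (\<Prod>p\<in>P. real p) powr \<epsilon>"
    by (simp add: prod_powr_distrib)
  also have "\<dots> \<le> n powr \<epsilon>"
  proof (rule powr_mono2)
    show "(\<Prod>p\<in>P. real p) \<le> n"
      using prod_subset_prime_factors_le[OF assms(1,3)] by (simp only: of_nat_prod[symmetric] of_nat_le_iff)
  qed (use assms(2) in \<open>auto intro: prod_nonneg\<close>)
  finally show ?thesis .
qed

lemma prod_prime_factors_one_plus_inverse_sqrt_le:
  fixes n T :: nat and \<epsilon> :: real
  assumes "n > 0" "\<epsilon> > 0" "4 / \<epsilon>\<^sup>2 \<le> T"
  shows "(\<Prod>p\<in>prime_factors n. 1 + 1 / sqrt p) \<le> 2 ^ T * n powr \<epsilon>"
proof -
  define small where "small = {p\<in>prime_factors n. p < T}"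
  define large where "large = {p\<in>prime_factors n. \<not> p < T}"
  have split: "prime_factors n = small \<union> large" "small \<inter> large = {}" "finite small" "finite large"
    unfolding small_def large_def by auto
  have "(\<Prod>p\<in>small. 1 + 1 / sqrt p) \<le> 2 ^ T"
  proof (rule prod_le_power)
    fix p assume "p \<in> small"
    then have "p \<ge> 2"
      by (auto simp: small_def intro: prime_ge_2_nat)
    then show "0 \<le> 1 + 1 / sqrt p \<and> 1 + 1 / sqrt p \<le> 2"
      by simp
  next
    show "card small \<le> T"
      using card_mono[of "{..<T}" small] by (auto simp: small_def)
  qed simp
  moreover have "(\<Prod>p\<in>large. 1 + 1 / sqrt p) \<le> n powr \<epsilon>"
    using assms by (intro prod_one_plus_inverse_sqrt_le_powr) (auto simp: large_def)
  ultimately have "(\<Prod>p\<in>small. 1 + 1 / sqrt p) * (\<Prod>p\<in>large. 1 + 1 / sqrt p) \<le> 2 ^ T * n powr \<epsilon>"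
    by (intro mult_mono) (auto intro: prod_nonneg)
  then show ?thesis
    using split by (simp add: prod.union_disjoint)
qed

section \<open>The second moment along the scales N = t^16\<close>

(* The true exponent is 18 l; the cruder 24 l makes the power in card_square_partners_le_scale an
   integer. *)
lemma fact_mult_shifted_product_le:
  fixes l t m :: nat
  assumes J: "finite J" "J \<subseteq> {..<l}" and "l \<le> t" "2 \<le> t" "m \<le> t ^ 16"
  shows "fact l * shifted_product J m \<le> t ^ (24 * l)"
proof -
  have "fact l \<le> l ^ l"
    using fact_le_power[of l, where 'a=nat] by simp
  also have "\<dots> \<le> t ^ l"
    using assms(3) by (rule power_mono) simp
  finally have fact_le: "fact l \<le> t ^ l" .
  have "t ^ 16 + t \<le> t * t ^ 16"
    using mult_le_mono1[OF assms(4), of "t ^ 16"] self_le_power[of t 16] assms(4) by linarith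
  also have "\<dots> = t ^ 17"
    using power_add[of t 1 16] by simp
  finally have "m + j \<le> t ^ 17" if "j \<in> J" for j
    using that J(2) assms(3,5) by fastforce
  then have "shifted_product J m \<le> (t ^ 17) ^ l"
    unfolding shifted_product_def using J assms(4) card_mono[OF finite_lessThan J(2)]
    by (intro prod_le_power) auto
  with fact_le have "fact l * shifted_product J m \<le> t ^ l * (t ^ 17) ^ l"
    by (rule mult_le_mono)
  also have "\<dots> = t ^ (18 * l)"
    by (simp flip: power_mult power_add)
  also have "\<dots> \<le> t ^ (24 * l)"
    using assms(4) by (intro power_increasing) auto
  finally show ?thesis .
qed

lemma card_square_partners_le_scale:
  fixes l t m :: nat
  assumes J: "finite J" "J \<subseteq> {..<l}" "J \<noteq> {}" and "1 \<le> l" "l \<le> t" "2 \<le> t"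
    and m: "m \<in> {1..t ^ 16}"
  shows "real (card {n\<in>{1..t ^ 16}. is_square (shifted_product J m * shifted_product J n)}) \<le>
    2 ^ (256 * l\<^sup>2 + 1) * real t ^ 11"
proof -
  define R where "R = fact l * shifted_product J m"
  have R_pos: "R > 0"
    using shifted_product_pos[OF J(1)] m by (simp add: R_def)
  have "l \<le> 3 * t ^ 16"
    using assms(5) self_le_power[of t 16] assms(6) by simp
  then have "real l \<le> 3 * real t ^ 16"
    by (metis of_nat_le_iff of_nat_mult of_nat_numeral of_nat_power)
  then have sqrt_le: "sqrt (real (t ^ 16 + l)) \<le> 2 * real t ^ 8"
    by (intro real_le_lsqrt) (simp_all add: power_mult_distrib flip: power_mult)
  have "real R \<le> real (t ^ (24 * l))"
    unfolding R_def of_nat_le_iff using m assms by (intro fact_mult_shifted_product_le) auto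
  then have "real R powr (1 / (8 * l)) \<le> real (t ^ (24 * l)) powr (1 / (8 * l))"
    by (intro powr_mono2) auto
  also have "\<dots> = real t powr (real (24 * l) * (1 / (8 * l)))"
    using assms(6) by (simp add: powr_realpow[symmetric] powr_powr del: of_nat_mult)
  also have "\<dots> = real t ^ 3"
    using assms(4,6) by (simp add: powr_realpow)
  finally have R_powr_le: "real R powr (1 / (8 * l)) \<le> real t ^ 3" .
  have "(\<Prod>p\<in>prime_factors R. 1 + 1 / sqrt p) \<le> 2 ^ (256 * l\<^sup>2) * real R powr (1 / (8 * l))"
    using assms(4) by (intro prod_prime_factors_one_plus_inverse_sqrt_le R_pos) (auto simp: power2_eq_square)
  also have "\<dots> \<le> 2 ^ (256 * l\<^sup>2) * real t ^ 3"
    using R_powr_le by simp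
  finally have prod_le: "(\<Prod>p\<in>prime_factors R. 1 + 1 / sqrt p) \<le> 2 ^ (256 * l\<^sup>2) * real t ^ 3" .
  have "real (card {n\<in>{1..t ^ 16}. is_square (shifted_product J m * shifted_product J n)}) \<le>
      sqrt (real (t ^ 16 + l)) * (\<Prod>p\<in>prime_factors R. 1 + 1 / sqrt p)"
    unfolding R_def using card_square_partners_le[OF J, of m "t ^ 16"] m by simp
  also have "\<dots> \<le> (2 * real t ^ 8) * (2 ^ (256 * l\<^sup>2) * real t ^ 3)"
    using sqrt_le prod_le by (intro mult_mono) (auto intro: prod_nonneg)
  also have "\<dots> = 2 ^ (256 * l\<^sup>2 + 1) * real t ^ 11"
    by (simp add: algebra_simps flip: power_add)
  finally show ?thesis .
qed

lemma card_square_pairs_le: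
  fixes l t :: nat
  assumes J: "finite J" "J \<subseteq> {..<l}" "J \<noteq> {}" and "1 \<le> l" "l \<le> t" "2 \<le> t"
  shows "real (card {(m, n) \<in> {1..t ^ 16} \<times> {1..t ^ 16}.
      is_square (shifted_product J m * shifted_product J n)}) \<le> 2 ^ (256 * l\<^sup>2 + 1) * real t ^ 27"
proof -
  let ?I = "{1..t ^ 16}"
  let ?partners = "\<lambda>m. {n\<in>?I. is_square (shifted_product J m * shifted_product J n)}"
  have "{(m, n) \<in> ?I \<times> ?I. is_square (shifted_product J m * shifted_product J n)} = (SIGMA m:?I. ?partners m)"
    by auto
  then have "real (card {(m, n) \<in> ?I \<times> ?I. is_square (shifted_product J m * shifted_product J n)}) =
      (\<Sum>m\<in>?I. real (card (?partners m)))"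
    by (simp add: card_SigmaI)
  also have "\<dots> \<le> (\<Sum>m\<in>?I. 2 ^ (256 * l\<^sup>2 + 1) * real t ^ 11)"
    using card_square_partners_le_scale[OF assms] by (intro sum_mono) blast
  also have "\<dots> = 2 ^ (256 * l\<^sup>2 + 1) * real t ^ 27"
    by (simp add: algebra_simps flip: power_add)
  finally show ?thesis .
qed

section \<open>Exceptional sets and the union bound\<close>

lemma card_abs_gt_times_square_le:
  fixes f :: "'a \<Rightarrow> real"
  assumes "finite A" "c > 0"
  shows "real (card {x\<in>A. c < \<bar>f x\<bar>}) * c\<^sup>2 \<le> (\<Sum>x\<in>A. (f x)\<^sup>2)"
proof -
  have "real (card {x\<in>A. c < \<bar>f x\<bar>}) * c\<^sup>2 = (\<Sum>x\<in>{x\<in>A. c < \<bar>f x\<bar>}. c\<^sup>2)"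
    by simp
  also have "\<dots> \<le> (\<Sum>x\<in>{x\<in>A. c < \<bar>f x\<bar>}. (f x)\<^sup>2)"
    using assms(2) by (intro sum_mono) (auto simp flip: abs_le_square_iff)
  also have "\<dots> \<le> (\<Sum>x\<in>A. (f x)\<^sup>2)"
    using assms(1) by (intro sum_mono2) auto
  finally show ?thesis .
qed

definition exceptional_sets :: "nat \<Rightarrow> nat \<Rightarrow> nat set set" where
  "exceptional_sets l t =
    {S. \<exists>J\<subseteq>{..<l}. J \<noteq> {} \<and> real t ^ 15 < \<bar>correlation_sum S J (t ^ 16)\<bar>}"

definition scale_weight :: "nat \<Rightarrow> nat \<Rightarrow> real" where
  "scale_weight l t = 1 / (2 ^ (l + 1) * (real t * (real t + 1)))"

(* Large enough that the 2^l shift sets J, each exceptional with proportion at most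
   2^(256 l^2 + 1) / t^3 by Chebyshev, fit into the weight of the scale. *)
definition scale_threshold :: "nat \<Rightarrow> nat" where
  "scale_threshold l = 2 ^ (256 * l\<^sup>2 + 2 * l + 3)"

definition admissible_scales :: "(nat \<times> nat) set" where
  "admissible_scales = {(l, t). 1 \<le> l \<and> scale_threshold l \<le> t}"

lemma scale_threshold_gt: "l < scale_threshold l"
proof -
  have "(2::nat) ^ l \<le> scale_threshold l"
    unfolding scale_threshold_def by (intro power_increasing) simp_all
  then show ?thesis
    using less_exp[of l] by linarith
qed

lemma scale_threshold_ge_2: "2 \<le> scale_threshold l"
  using power_increasing[of 1 "256 * l\<^sup>2 + 2 * l + 3" "2::nat"] by (simp add: scale_threshold_def)

lemma admissible_scales_subset: "admissible_scales \<subseteq> {1..} \<times> {1..}"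
proof
  fix x assume "x \<in> admissible_scales"
  then obtain l t where "x = (l, t)" "1 \<le> l" "scale_threshold l \<le> t"
    by (auto simp: admissible_scales_def)
  then show "x \<in> {1..} \<times> {1..}"
    using scale_threshold_ge_2[of l] by auto
qed

lemma scale_threshold_bound:
  assumes "scale_threshold l \<le> t"
  shows "2 ^ l * (2 ^ (256 * l\<^sup>2 + 1) / real t ^ 3) \<le> scale_weight l t"
proof -
  define c where "c = 256 * l\<^sup>2 + 2 * l + 2"
  have t_pos: "real t > 0"
    using assms scale_threshold_ge_2[of l] by simp
  have "scale_threshold l = 2 * 2 ^ c"
    by (simp add: scale_threshold_def c_def flip: power_Suc)
  then have "2 * 2 ^ c \<le> real t"
    using assms by (metis of_nat_le_iff of_nat_mult of_nat_numeral of_nat_power)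
  have "2 ^ c * (real t * (real t + 1)) \<le> 2 ^ c * (real t * (2 * real t))"
    using t_pos by (intro mult_left_mono) auto
  also have "\<dots> = (2 * 2 ^ c) * real t * real t"
    by (simp add: algebra_simps)
  also have "\<dots> \<le> real t * real t * real t"
    using \<open>2 * 2 ^ c \<le> real t\<close> t_pos by (intro mult_right_mono) auto
  also have "\<dots> = real t ^ 3"
    by (simp add: power3_eq_cube)
  also have "2 ^ c * (real t * (real t + 1)) =
      (2 ^ l * 2 ^ (256 * l\<^sup>2 + 1)) * (2 ^ (l + 1) * (real t * (real t + 1)))"
    by (simp add: c_def algebra_simps flip: power_add)
  finally have "(2 ^ l * 2 ^ (256 * l\<^sup>2 + 1)) * (2 ^ (l + 1) * (real t * (real t + 1))) \<le> real t ^ 3" .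
  then show ?thesis
    using t_pos unfolding scale_weight_def by (simp add: divide_simps mult.commute)
qed

lemma card_large_correlation_le:
  assumes J: "J \<subseteq> {..<l}" "J \<noteq> {}" and "1 \<le> l" "l \<le> t" "2 \<le> t" "t ^ 16 + l \<le> M"
  shows "real (card {S\<in>Pow {..<M}. real t ^ 15 < \<bar>correlation_sum S J (t ^ 16)\<bar>}) \<le>
    2 ^ M * (2 ^ (256 * l\<^sup>2 + 1) / real t ^ 3)"
    (is "real (card ?large) \<le> _")
proof -
  have "real (card ?large) * (real t ^ 15)\<^sup>2 \<le> (\<Sum>S\<in>Pow {..<M}. (correlation_sum S J (t ^ 16))\<^sup>2)"
    using assms by (intro card_abs_gt_times_square_le) auto
  also have "\<dots> = 2 ^ M * real (card {(m, n) \<in> {1..t ^ 16} \<times> {1..t ^ 16}.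
      is_square (shifted_product J m * shifted_product J n)})"
    using sum_correlation_sum_squared[OF finite_subset[OF J(1)] J(1) assms(6)] by simp
  also have "\<dots> \<le> 2 ^ M * (2 ^ (256 * l\<^sup>2 + 1) * real t ^ 27)"
    using card_square_pairs_le[OF finite_subset[OF J(1)] J assms(3-5)] by (intro mult_left_mono) auto
  also have "(real t ^ 15)\<^sup>2 = real t ^ 3 * real t ^ 27"
    by (simp flip: power_add power_mult)
  finally have "(real (card ?large) * real t ^ 3) * real t ^ 27 \<le> (2 ^ M * 2 ^ (256 * l\<^sup>2 + 1)) * real t ^ 27"
    by (simp only: ac_simps)
  then have "real (card ?large) * real t ^ 3 \<le> 2 ^ M * 2 ^ (256 * l\<^sup>2 + 1)"
    using assms(5) by (simp only: mult_le_cancel_right_pos zero_less_power of_nat_0_less_iff)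
  then show ?thesis
    using assms(5) by (simp add: pos_le_divide_eq)
qed

lemma card_exceptional_sets_le:
  assumes "1 \<le> l" "scale_threshold l \<le> t" "t ^ 16 + l \<le> M"
  shows "real (card (exceptional_sets l t \<inter> Pow {..<M})) \<le> 2 ^ M * scale_weight l t"
proof -
  define C :: real where "C = 2 ^ M * (2 ^ (256 * l\<^sup>2 + 1) / real t ^ 3)"
  define large where "large J = {S\<in>Pow {..<M}. real t ^ 15 < \<bar>correlation_sum S J (t ^ 16)\<bar>}" for J
  have t_ge: "2 \<le> t" "l \<le> t"
    using assms(2) scale_threshold_gt[of l] scale_threshold_ge_2[of l] by linarith+
  have "exceptional_sets l t \<inter> Pow {..<M} = (\<Union>J\<in>Pow {..<l} - {{}}. large J)"
    unfolding exceptional_sets_def large_def by auto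
  then have "real (card (exceptional_sets l t \<inter> Pow {..<M})) \<le> (\<Sum>J\<in>Pow {..<l} - {{}}. real (card (large J)))"
    using card_UN_le[of "Pow {..<l} - {{}}" large] by (simp flip: of_nat_sum)
  also have "\<dots> \<le> real (card (Pow {..<l} - {{}})) * C"
    unfolding large_def C_def using assms(1,3) t_ge
    by (intro sum_bounded_above card_large_correlation_le) auto
  also have "\<dots> \<le> 2 ^ l * C"
  proof (rule mult_right_mono)
    have "card (Pow {..<l} - {{}}) \<le> 2 ^ l"
      using card_Diff1_le[of "Pow {..<l}" "{}"] by (simp add: card_Pow)
    then show "real (card (Pow {..<l} - {{}})) \<le> 2 ^ l"
      by (metis of_nat_le_iff of_nat_numeral of_nat_power)
  qed (simp add: C_def)
  also have "\<dots> = 2 ^ M * (2 ^ l * (2 ^ (256 * l\<^sup>2 + 1) / real t ^ 3))"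
    by (simp add: C_def ac_simps)
  also have "\<dots> \<le> 2 ^ M * scale_weight l t"
    by (intro mult_left_mono scale_threshold_bound[OF assms(2)]) simp
  finally show ?thesis .
qed

lemma sum_power_half: "(\<Sum>l=1..L. (1 / 2 :: real) ^ (l + 1)) = 1 / 2 - (1 / 2) ^ (L + 1)"
  by (induction L) simp_all

lemma sum_inverse_times_Suc: "(\<Sum>t=1..T. 1 / (real t * (real t + 1))) = 1 - 1 / (real T + 1)"
proof (induction T)
  case (Suc T)
  then have "(\<Sum>t=1..Suc T. 1 / (real t * (real t + 1))) =
      1 - 1 / (real T + 1) + 1 / ((real T + 1) * (real T + 2))"
    by (simp add: add.commute)
  also have "\<dots> = 1 - 1 / (real (Suc T) + 1)"
    by (simp add: divide_simps) (simp add: algebra_simps)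
  finally show ?case .
qed simp

lemma sum_scale_weight_less_1:
  assumes "F \<subseteq> {1..L} \<times> {1..T}"
  shows "(\<Sum>(l, t)\<in>F. scale_weight l t) < 1"
proof -
  have "(\<Sum>(l, t)\<in>F. scale_weight l t) \<le> (\<Sum>(l, t)\<in>{1..L} \<times> {1..T}. scale_weight l t)"
    using assms by (intro sum_mono2) (auto simp: scale_weight_def)
  also have "\<dots> = (\<Sum>l=1..L. (1 / 2) ^ (l + 1)) * (\<Sum>t=1..T. 1 / (real t * (real t + 1)))"
    by (simp add: scale_weight_def sum_product sum.cartesian_product power_one_over)
  also have "\<dots> = (1 / 2 - (1 / 2) ^ (L + 1)) * (1 - 1 / (real T + 1))"
    by (simp only: sum_power_half sum_inverse_times_Suc)
  also have "\<dots> \<le> 1 / 2 * 1"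
    by (intro mult_mono) (auto simp: field_simps)
  also have "\<dots> < 1"
    by simp
  finally show ?thesis .
qed

lemma finite_subset_box:
  fixes F :: "(nat \<times> nat) set"
  assumes "finite F" "F \<subseteq> {1..} \<times> {1..}"
  obtains L T where "F \<subseteq> {1..L} \<times> {1..T}"
proof -
  obtain L T where "\<forall>l\<in>fst ` F. l \<le> L" "\<forall>t\<in>snd ` F. t \<le> T"
    using assms(1) finite_nat_set_iff_bounded_le by (meson finite_imageI)
  with assms(2) have "F \<subseteq> {1..L} \<times> {1..T}"
    by force
  then show ?thesis
    using that by blast
qed

lemma exists_set_avoiding_exceptional_sets_finite:
  assumes "finite F" "F \<subseteq> admissible_scales"
  shows "\<exists>S. \<forall>(l, t)\<in>F. S \<notin> exceptional_sets l t"
proof -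
  obtain L T where box: "F \<subseteq> {1..L} \<times> {1..T}"
    using assms admissible_scales_subset finite_subset_box by (meson order_trans)
  define M where "M = T ^ 16 + L"
  define U where "U = (\<Union>(l, t)\<in>F. exceptional_sets l t \<inter> Pow {..<M})"
  have "real (card U) \<le> (\<Sum>(l, t)\<in>F. real (card (exceptional_sets l t \<inter> Pow {..<M})))"
    unfolding U_def using card_UN_le[OF assms(1), of "\<lambda>(l, t). exceptional_sets l t \<inter> Pow {..<M}"]
    by (simp add: case_prod_unfold flip: of_nat_sum)
  also have "\<dots> \<le> (\<Sum>(l, t)\<in>F. 2 ^ M * scale_weight l t)"
  proof (intro sum_mono, clarify)
    fix l t assume "(l, t) \<in> F"
    moreover from this have "l \<le> L" "t \<le> T"
      using box by auto
    then have "t ^ 16 + l \<le> M"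
      unfolding M_def by (intro add_mono power_mono) auto
    ultimately show "real (card (exceptional_sets l t \<inter> Pow {..<M})) \<le> 2 ^ M * scale_weight l t"
      using assms(2) card_exceptional_sets_le[of l t M] by (auto simp: admissible_scales_def)
  qed
  also have "\<dots> = 2 ^ M * (\<Sum>(l, t)\<in>F. scale_weight l t)"
    by (simp add: sum_distrib_left case_prod_unfold)
  also have "\<dots> < 2 ^ M"
    using sum_scale_weight_less_1[OF box] by simp
  finally have "card U < card (Pow {..<M})"
    by (simp add: card_Pow)
  moreover have "U \<subseteq> Pow {..<M}"
    unfolding U_def by blast
  ultimately obtain S where "S \<in> Pow {..<M}" "S \<notin> U"
    by (metis less_irrefl subset_antisym subsetI)
  then show ?thesis
    unfolding U_def by blast
qed

section \<open>Compactness\<close>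

lemma compact_UNIV_bool_fun: "compact (UNIV :: ('a \<Rightarrow> bool) set)"
proof -
  have "compactin (product_topology (\<lambda>_. euclidean) UNIV) (PiE UNIV (\<lambda>_. UNIV :: bool set))"
    by (rule compactin_PiE[THEN iffD2]) (simp add: finite_imp_compact)
  then show ?thesis
    by (simp add: euclidean_product_topology)
qed

lemma open_cylinder:
  fixes f :: "'a \<Rightarrow> 'b :: discrete_topology"
  assumes "finite K"
  shows "open {g. \<forall>k\<in>K. g k = f k}"
  using product_topology_basis'[OF assms, where x="\<lambda>k. k" and U="\<lambda>k. {f k}"] by (simp add: open_discrete)

lemma closed_avoiding_finitely_determined:
  fixes B :: "'a set set"
  assumes "finite K" and determined: "\<And>S S'. S \<inter> K = S' \<inter> K \<Longrightarrow> S \<in> B \<Longrightarrow> S' \<in> B"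
  shows "closed {f. Collect f \<notin> B}"
  unfolding closed_def
proof (rule Topological_Spaces.openI)
  fix f assume f: "f \<in> - {f. Collect f \<notin> B}"
  have "{g. \<forall>k\<in>K. g k = f k} \<subseteq> - {f. Collect f \<notin> B}"
  proof
    fix g assume "g \<in> {g. \<forall>k\<in>K. g k = f k}"
    then have "Collect f \<inter> K = Collect g \<inter> K"
      by blast
    moreover have "Collect f \<in> B"
      using f by simp
    ultimately have "Collect g \<in> B"
      by (rule determined)
    then show "g \<in> - {f. Collect f \<notin> B}"
      by simp
  qed
  then show "\<exists>T. open T \<and> f \<in> T \<and> T \<subseteq> - {f. Collect f \<notin> B}"
    using open_cylinder[OF assms(1)] by blast
qed

(* Tychonoff: the characteristic functions of sets avoiding B i form a closed subset of the
   compact space 'a \<Rightarrow> bool. *)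
lemma avoid_all_if_avoid_finite:
  fixes B :: "'i \<Rightarrow> 'a set set" and K :: "'i \<Rightarrow> 'a set"
  assumes finite: "\<And>i. i \<in> I \<Longrightarrow> finite (K i)"
    and determined: "\<And>i S S'. i \<in> I \<Longrightarrow> S \<inter> K i = S' \<inter> K i \<Longrightarrow> S \<in> B i \<Longrightarrow> S' \<in> B i"
    and avoid_finite: "\<And>F. finite F \<Longrightarrow> F \<subseteq> I \<Longrightarrow> \<exists>S. \<forall>i\<in>F. S \<notin> B i"
  shows "\<exists>S. \<forall>i\<in>I. S \<notin> B i"
proof -
  have "closed {f. Collect f \<notin> B i}" if "i \<in> I" for i
    using finite[OF that] determined[OF that] by (rule closed_avoiding_finitely_determined)
  moreover have "UNIV \<inter> (\<Inter>i\<in>F. {f. Collect f \<notin> B i}) \<noteq> {}" if F: "finite F" "F \<subseteq> I" for F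
  proof -
    obtain S where "\<forall>i\<in>F. S \<notin> B i"
      using avoid_finite[OF F] by blast
    then have "(\<lambda>k. k \<in> S) \<in> (\<Inter>i\<in>F. {f. Collect f \<notin> B i})"
      by simp
    then show ?thesis
      by blast
  qed
  ultimately have "UNIV \<inter> (\<Inter>i\<in>I. {f. Collect f \<notin> B i}) \<noteq> {}"
    by (rule compact_imp_fip_image[OF compact_UNIV_bool_fun])
  then show ?thesis
    by auto
qed

lemma correlation_sum_cong:
  assumes "J \<subseteq> {..<l}" "S \<inter> {..<N + l} = S' \<inter> {..<N + l}"
  shows "correlation_sum S J N = correlation_sum S' J N"
  unfolding correlation_sum_def
proof (intro sum.cong refl prod.cong)
  fix n j assume "n \<in> {1..N}" "j \<in> J"
  then have "{..<N + l} \<inter> {..n + j} = {..n + j}"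
    using assms(1) by auto
  moreover have "S \<inter> {..<N + l} \<inter> {..n + j} = S' \<inter> {..<N + l} \<inter> {..n + j}"
    using assms(2) by simp
  ultimately show "liouville_on S (n + j) = liouville_on S' (n + j)"
    by (intro liouville_on_cong) (simp add: Int_assoc)
qed

lemma exceptional_sets_cong:
  assumes "S \<inter> {..<t ^ 16 + l} = S' \<inter> {..<t ^ 16 + l}" "S \<in> exceptional_sets l t"
  shows "S' \<in> exceptional_sets l t"
proof -
  obtain J where J: "J \<subseteq> {..<l}" "J \<noteq> {}" "real t ^ 15 < \<bar>correlation_sum S J (t ^ 16)\<bar>"
    using assms(2) by (auto simp: exceptional_sets_def)
  moreover have "correlation_sum S J (t ^ 16) = correlation_sum S' J (t ^ 16)"
    using J(1) assms(1) by (rule correlation_sum_cong)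
  ultimately show ?thesis
    by (auto simp: exceptional_sets_def)
qed

lemma exists_set_avoiding_exceptional_sets:
  "\<exists>S. \<forall>(l, t)\<in>admissible_scales. S \<notin> exceptional_sets l t"
proof -
  have "\<exists>S. \<forall>i\<in>admissible_scales. S \<notin> (case i of (l, t) \<Rightarrow> exceptional_sets l t)"
  proof (rule avoid_all_if_avoid_finite[where K = "\<lambda>(l, t). {..<t ^ 16 + l}"])
    show "finite (case i of (l, t) \<Rightarrow> {..<t ^ 16 + l})" for i :: "nat \<times> nat"
      by (cases i) simp
    show "S' \<in> (case i of (l, t) \<Rightarrow> exceptional_sets l t)"
      if "S \<inter> (case i of (l, t) \<Rightarrow> {..<t ^ 16 + l}) = S' \<inter> (case i of (l, t) \<Rightarrow> {..<t ^ 16 + l})"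
        and "S \<in> (case i of (l, t) \<Rightarrow> exceptional_sets l t)" for i S S'
    proof (cases i)
      case (Pair l t)
      then show ?thesis
        using that exceptional_sets_cong[of S t l S'] by simp
    qed
    show "\<exists>S. \<forall>i\<in>F. S \<notin> (case i of (l, t) \<Rightarrow> exceptional_sets l t)" if "finite F" "F \<subseteq> admissible_scales" for F
      using exists_set_avoiding_exceptional_sets_finite[OF that] by auto
  qed
  then show ?thesis
    by auto
qed

section \<open>From the scales t^16 to all N\<close>

lemma abs_correlation_sum_diff_le:
  assumes "N' \<le> N"
  shows "\<bar>correlation_sum S J N - correlation_sum S J N'\<bar> \<le> real (N - N')"
proof -
  have split: "{1..N} = {1..N'} \<union> {N'<..N}"
    using assms by auto
  have "correlation_sum S J N = correlation_sum S J N' + (\<Sum>n\<in>{N'<..N}. \<Prod>j\<in>J. liouville_on S (n + j))"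
    unfolding correlation_sum_def split by (rule sum.union_disjoint) auto
  then have "\<bar>correlation_sum S J N - correlation_sum S J N'\<bar> = \<bar>\<Sum>n\<in>{N'<..N}. \<Prod>j\<in>J. liouville_on S (n + j)\<bar>"
    by simp
  also have "\<dots> \<le> (\<Sum>n\<in>{N'<..N}. \<bar>\<Prod>j\<in>J. liouville_on S (n + j)\<bar>)"
    by (rule sum_abs)
  also have "\<dots> = real (N - N')"
    by (simp add: abs_prod)
  finally show ?thesis .
qed

lemma abs_correlation_sum_le_between_scales:
  assumes "r ^ 16 \<le> N" "N < (r + 1) ^ 16" "\<bar>correlation_sum S J (r ^ 16)\<bar> \<le> real r ^ 15"
  shows "\<bar>correlation_sum S J N\<bar> \<le> real r ^ 15 + ((real r + 1) ^ 16 - real r ^ 16)"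
proof -
  have "real N \<le> (real r + 1) ^ 16"
    using assms(2) by (metis less_imp_le of_nat_1 of_nat_add of_nat_le_iff of_nat_power)
  moreover have "\<bar>correlation_sum S J N\<bar> \<le> \<bar>correlation_sum S J (r ^ 16)\<bar> + real (N - r ^ 16)"
    using abs_correlation_sum_diff_le[OF assms(1), of S J] by linarith
  ultimately show ?thesis
    using assms(1,3) by (simp add: of_nat_diff)
qed

lemma filterlim_nth_root_nat:
  assumes "k > 0"
  shows "filterlim (nth_root_nat k) at_top sequentially"
  unfolding filterlim_at_top
proof
  fix m
  show "\<forall>\<^sub>F n in sequentially. m \<le> nth_root_nat k n"
    using eventually_ge_at_top[of "m ^ k"] by eventually_elim (use assms in \<open>auto intro: nth_root_nat_ge\<close>)
qed

lemma correlation_sum_over_N_tendsto_0: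
  assumes "\<forall>\<^sub>F t in sequentially. \<bar>correlation_sum S J (t ^ 16)\<bar> \<le> real t ^ 15"
  shows "(\<lambda>N. correlation_sum S J N / real N) \<longlonglongrightarrow> 0"
proof (rule Lim_null_comparison)
  define r where "r N = nth_root_nat 16 N" for N
  define g :: "real \<Rightarrow> real" where "g x = (x ^ 15 + ((x + 1) ^ 16 - x ^ 16)) / x ^ 16" for x
  have r_le: "r N ^ 16 \<le> N" for N
    unfolding r_def by (rule nth_root_nat_power_le) simp
  have r_gt: "N < (r N + 1) ^ 16" for N
    unfolding r_def using nth_root_nat_ge[of 16 "r N + 1" N] r_def by fastforce
  have r_filterlim: "filterlim r at_top sequentially"
    unfolding r_def by (rule filterlim_nth_root_nat) simp
  have "(g \<longlongrightarrow> 0) at_top"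
    unfolding g_def by real_asymp
  then show "((\<lambda>N. g (real (r N))) \<longlongrightarrow> 0) sequentially"
    by (rule filterlim_compose[OF _ filterlim_compose[OF filterlim_real_sequentially r_filterlim]])
  show "\<forall>\<^sub>F N in sequentially. norm (correlation_sum S J N / real N) \<le> g (real (r N))"
    using eventually_compose_filterlim[OF eventually_conj[OF eventually_ge_at_top[of 1] assms] r_filterlim]
  proof eventually_elim
    case (elim N)
    define t where "t = real (r N)"
    have "1 \<le> t"
      using elim by (simp add: t_def)
    then have "t ^ 16 \<le> (t + 1) ^ 16" "0 \<le> t ^ 15" "0 < t ^ 16"
      by (auto intro: power_mono)
    moreover have "t ^ 16 \<le> real N"
      using r_le[of N] unfolding t_def by (metis of_nat_le_iff of_nat_power)
    moreover have "\<bar>correlation_sum S J N\<bar> \<le> t ^ 15 + ((t + 1) ^ 16 - t ^ 16)"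
      unfolding t_def using abs_correlation_sum_le_between_scales[OF r_le r_gt] elim by blast
    ultimately have "\<bar>correlation_sum S J N\<bar> / real N \<le> (t ^ 15 + ((t + 1) ^ 16 - t ^ 16)) / t ^ 16"
      by (intro frac_le) linarith+
    then show ?case
      unfolding g_def t_def[symmetric] by (simp add: abs_divide)
  qed
qed

lemma exists_liouville_on_correlations_tendsto_0:
  "\<exists>S. \<forall>J. finite J \<longrightarrow> J \<noteq> {} \<longrightarrow> (\<lambda>N. correlation_sum S J N / real N) \<longlonglongrightarrow> 0"
proof -
  obtain S where S: "\<forall>(l, t)\<in>admissible_scales. S \<notin> exceptional_sets l t"
    using exists_set_avoiding_exceptional_sets by blast
  have "(\<lambda>N. correlation_sum S J N / real N) \<longlonglongrightarrow> 0" if J: "finite J" "J \<noteq> {}" for J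
  proof (rule correlation_sum_over_N_tendsto_0)
    define l where "l = Suc (Max J)"
    have "J \<subseteq> {..<l}"
      using J by (auto simp: l_def less_Suc_eq_le)
    show "\<forall>\<^sub>F t in sequentially. \<bar>correlation_sum S J (t ^ 16)\<bar> \<le> real t ^ 15"
      using eventually_ge_at_top[of "scale_threshold l"]
    proof eventually_elim
      case (elim t)
      then show ?case
        using S J \<open>J \<subseteq> {..<l}\<close> by (auto simp: l_def admissible_scales_def exceptional_sets_def not_less)
    qed
  qed
  then show ?thesis
    by blast
qed

section \<open>Normality\<close>

lemma prod_of_bool: "finite A \<Longrightarrow> (\<Prod>x\<in>A. of_bool (P x) :: 'a :: comm_semiring_1) = of_bool (\<forall>x\<in>A. P x)"
  by (induction A rule: finite_induct) auto

(* Position j agrees with w iff (1 + s_j f(i + j)) / 2 = 1, where s_j = -1 if w ! j and s_j = 1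
   otherwise; expanding the product of these factors gives the sum over J. *)
lemma of_bool_occurs_at_eq:
  fixes f :: "nat \<Rightarrow> real"
  assumes f: "\<And>n. f n = 1 \<or> f n = -1"
  shows "of_bool (occurs_at (\<lambda>n. f n = -1) w i) =
    (1 / 2) ^ length w * (\<Sum>J\<in>Pow {..<length w}. (\<Prod>j\<in>J. if w ! j then -1 else 1) * (\<Prod>j\<in>J. f (i + j)))"
proof -
  define s where "s j = (if w ! j then -1 else 1 :: real)" for j
  have factor: "(of_bool ((f (i + j) = -1) = w ! j) :: real) = (s j * f (i + j) + 1) / 2" for j
    using f[of "i + j"] by (auto simp: s_def)
  have "of_bool (occurs_at (\<lambda>n. f n = -1) w i) = (of_bool (\<forall>j\<in>{..<length w}. (f (i + j) = -1) = w ! j) :: real)"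
    by (auto simp: occurs_at_def)
  also have "\<dots> = (\<Prod>j<length w. of_bool ((f (i + j) = -1) = w ! j))"
    by (rule prod_of_bool[symmetric]) simp
  also have "\<dots> = (\<Prod>j<length w. s j * f (i + j) + 1) / 2 ^ length w"
    by (simp add: factor prod_dividef)
  also have "(\<Prod>j<length w. s j * f (i + j) + 1) =
      (\<Sum>J\<in>Pow {..<length w}. (\<Prod>j\<in>J. s j * f (i + j)) * (\<Prod>j\<in>{..<length w} - J. 1))"
    by (rule prod_add) simp
  also have "\<dots> = (\<Sum>J\<in>Pow {..<length w}. (\<Prod>j\<in>J. s j) * (\<Prod>j\<in>J. f (i + j)))"
    by (simp add: prod.distrib)
  finally show ?thesis
    by (simp add: s_def power_one_over)
qed

lemma occurrence_frequency_eq: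
  fixes f :: "nat \<Rightarrow> real"
  assumes "\<And>n. f n = 1 \<or> f n = -1"
  shows "real (card {i \<in> {1..N}. occurs_at (\<lambda>n. f n = -1) w i}) / real N =
    (1 / 2) ^ length w * (\<Sum>J\<in>Pow {..<length w}.
      (\<Prod>j\<in>J. if w ! j then -1 else 1) * ((\<Sum>n=1..N. \<Prod>j\<in>J. f (n + j)) / real N))"
proof -
  let ?c = "\<lambda>J. \<Prod>j\<in>J. if w ! j then -1 else 1 :: real"
  have "real (card {i \<in> {1..N}. occurs_at (\<lambda>n. f n = -1) w i}) =
      (\<Sum>i=1..N. of_bool (occurs_at (\<lambda>n. f n = -1) w i))"
    by (simp add: Int_def)
  also have "\<dots> = (\<Sum>i=1..N. (1 / 2) ^ length w * (\<Sum>J\<in>Pow {..<length w}. ?c J * (\<Prod>j\<in>J. f (i + j))))"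
    by (simp only: of_bool_occurs_at_eq[OF assms])
  also have "\<dots> = (1 / 2) ^ length w * (\<Sum>J\<in>Pow {..<length w}. ?c J * (\<Sum>i=1..N. \<Prod>j\<in>J. f (i + j)))"
    by (simp only: sum_distrib_left) (rule sum.swap)
  finally show ?thesis
    by (simp add: sum_divide_distrib flip: times_divide_eq_right)
qed

lemma normal_set_if_correlations_tendsto_0:
  fixes f :: "nat \<Rightarrow> real"
  assumes f: "\<And>n. f n = 1 \<or> f n = -1"
    and corr: "\<And>J. finite J \<Longrightarrow> J \<noteq> {} \<Longrightarrow> (\<lambda>N. (\<Sum>n=1..N. \<Prod>j\<in>J. f (n + j)) / real N) \<longlonglongrightarrow> 0"
  shows "normal_set {n. f n = -1}"
  unfolding normal_set_def normal_seq_def mem_Collect_eq occurrence_frequency_eq[OF f]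
proof
  fix w :: "bool list"
  let ?c = "\<lambda>J. \<Prod>j\<in>J. if w ! j then -1 else 1 :: real"
  let ?avg = "\<lambda>J N. (\<Sum>n=1..N. \<Prod>j\<in>J. f (n + j)) / real N"
  have "(\<lambda>N. (1 / 2) ^ length w * (\<Sum>J\<in>Pow {..<length w}. ?c J * ?avg J N)) \<longlonglongrightarrow>
      (1 / 2) ^ length w * (\<Sum>J\<in>Pow {..<length w}. ?c J * of_bool (J = {}))"
  proof (intro tendsto_mult_left tendsto_sum)
    fix J assume "J \<in> Pow {..<length w}"
    then have "finite J"
      by (rule finite_subset[OF PowD]) simp
    show "(\<lambda>N. ?avg J N) \<longlonglongrightarrow> of_bool (J = {})"
    proof (cases "J = {}")
      case True
      have "\<forall>\<^sub>F N in sequentially. ?avg J N = 1"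
        using eventually_ge_at_top[of 1] by eventually_elim (simp add: True)
      then show ?thesis
        using True by (simp add: tendsto_eventually)
    next
      case False
      then show ?thesis
        using corr[OF \<open>finite J\<close> False] by simp
    qed
  qed
  moreover have "(\<Sum>J\<in>Pow {..<length w}. ?c J * of_bool (J = {})) = 1"
    by simp
  ultimately show "(\<lambda>N. (1 / 2) ^ length w * (\<Sum>J\<in>Pow {..<length w}. ?c J * ?avg J N)) \<longlonglongrightarrow> (1 / 2) ^ length w"
    by simp
qed

theorem mainTheorem3:
  shows "\<exists>A :: nat set. A \<subseteq> {1..} \<and> normal_set A \<and>
           \<not> (\<exists>x\<in>A. \<exists>y\<in>A. \<exists>z\<in>A. x * y = z)"
proof -
  obtain S where S: "\<And>J. finite J \<Longrightarrow> J \<noteq> {} \<Longrightarrow> (\<lambda>N. correlation_sum S J N / real N) \<longlonglongrightarrow> 0"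
    using exists_liouville_on_correlations_tendsto_0 by blast
  define A where "A = {n. liouville_on S n = -1}"
  have "0 \<notin> A"
    by (simp add: A_def)
  then have "A \<subseteq> {1..}"
    by (auto simp: Suc_le_eq intro!: gr0I)
  moreover have "normal_set A"
    unfolding A_def using S
    by (intro normal_set_if_correlations_tendsto_0 liouville_on_cases) (simp add: correlation_sum_def)
  moreover have "\<not> (\<exists>x\<in>A. \<exists>y\<in>A. \<exists>z\<in>A. x * y = z)"
  proof clarify
    fix x y assume "x \<in> A" "y \<in> A" "x * y \<in> A"
    moreover from this \<open>0 \<notin> A\<close> have "x \<noteq> 0" "y \<noteq> 0"
      by (auto intro!: gr0I)
    ultimately show False
      by (simp add: A_def liouville_on_mult)
  qed
  ultimately show ?thesis
    by blast
qed

end
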